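(* $\mathsf d\otimes\mathsf I\mathrel{;}\mathsf I\otimes\mathsf e\ \sim\ \mathsf I\ \sim\ \mathsf I\otimes\mathsf d\mathrel{;}\mathsf e\otimes\mathsf I$, where $\otimes$ binds tighter than $;$.
   Context: Wire calculus. Fix a set $\Sigma$ of signals and $\iota\notin\Sigma$; $L=\Sigma\cup\{\iota\}$; $\vec\iota$ denotes a word of $\iota$'s. Prefix strings are words over atoms: signal variables $x$, binders $\lambda x$, $\iota$, constants $\sigma\in\Sigma$. Terms: $P::= Y \mid P\mathrel{;}P\mid P\otimes P\mid \frac{u}{v}.P\mid P+P\mid \mu Y{:}\tau.P$ ($\tau$ a sort $(k,l)$). In $\frac{u}{v}.P$, variables $x$ with $\lambda x$ in $uv$ are bound (set $bd$). Sorting: $P:(k,n),R:(n,l)\Rightarrow P\mathrel{;}R:(k,l)$; $P:(k,l),Q:(m,n)\Rightarrow P\otimes Q:(k+m,l+n)$; $\frac{u}{v}.P:(|u|,|v|)$ when $P$ has that sort; $\mu Y{:}\tau.P:\tau$; $P+Q:\tau$ for $P,Q:\tau$. Closed terms only. Transitions $P\xrightarrow[\vec b]{\vec a}Q$ are generated by: (Refl) $P\xrightarrow[\vec\iota]{\vec\iota}P$; ($\iota$L) $P\xrightarrow[\vec\iota]{\vec\iota}R\xrightarrow[\vec b]{\vec a}Q$ gives $P\xrightarrow[\vec b]{\vec a}Q$; ($\iota$R) $P\xrightarrow[\vec b]{\vec a}R\xrightarrow[\vec\iota]{\vec\iota}Q$ gives $P\xrightarrow[\vec b]{\vec a}Q$;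 (Cut) $P\xrightarrow[\vec c]{\vec a}Q$, $R\xrightarrow[\vec b]{\vec c}S$ give $P\mathrel{;}R\xrightarrow[\vec b]{\vec a}Q\mathrel{;}S$; (Ten) $P\xrightarrow[\vec b]{\vec a}Q$, $R\xrightarrow[\vec d]{\vec c}S$ give $P\otimes R\xrightarrow[\vec b\vec d]{\vec a\vec c}Q\otimes S$; (Pref) for each $\sigma:bd\to L$, $\frac{u}{v}.P\xrightarrow[v|_\sigma]{u|_\sigma}P|_\sigma$; (Rec) $P[\mu Y.P/Y]\xrightarrow[\vec b]{\vec a}Q$ gives $\mu Y.P\xrightarrow[\vec b]{\vec a}Q$; ($+\iota$) and ($+$L/R) as in CSP external choice (choice resolved only by a transition whose labels are not all $\iota$). Bisimilarity $\sim$: $P\sim Q$ iff some relation $S\ni(P,Q)$ satisfies: if $(P',Q')\in S$ and $P'\xrightarrow[\vec b]{\vec a}P''$ then $Q'\xrightarrow[\vec b]{\vec a}Q''$ with $(P'',Q'')\in S$, and symmetrically. Constants: $\mathsf I=\mu Y.\frac{\lambda x}{\lambda x}.Y:(1,1)$ (transitions $\mathsf I\xrightarrow[a]{a}\mathsf I$ for $a\in L$); $\mathsf d=\mu Y.\frac{\epsilon}{\lambda x\lambda x}.Y:(0,2)$ (transitions $\mathsf d\xrightarrow[aa]{}\mathsf d$); $\mathsf e=\mu Y.\frac{\lambda x\lambda x}{\epsilon}.Y:(2,0)$ (transitions $\mathsf e\xrightarrow[]{aa}\mathsf e$), $\epsilon$ the empty string. *)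

theory Defs
  imports Main
begin

text \<open>Signals form the type 's (the set Sigma); the label set
L = Sigma + {iota} is rendered as 's option, with None = iota and Some c = c.
Signal variables and recursion variables are both named by natural numbers
(separate namespaces).\<close>

type_synonym 's lab = "'s option"

datatype 's atom = AVar nat | ALam nat | AIota | AConst 's

datatype 's wterm =
    TVar nat
  | Seq "'s wterm" "'s wterm"
  | Ten "'s wterm" "'s wterm"
  | Pref "'s atom list" "'s atom list" "'s wterm"
  | Plus "'s wterm" "'s wterm"
  | Mu nat "nat \<times> nat" "'s wterm"

definition bd :: "'s atom list \<Rightarrow> 's atom list \<Rightarrow> nat set" where
  "bd u v = {x. ALam x \<in> set (u @ v)}"

definition atom_of_lab :: "'s lab \<Rightarrow> 's atom" where
  "atom_of_lab a = (case a of None \<Rightarrow> AIota | Some c \<Rightarrow> AConst c)"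

fun lab_of :: "(nat \<Rightarrow> 's lab) \<Rightarrow> 's atom \<Rightarrow> 's lab" where
  "lab_of \<sigma> (AVar x) = \<sigma> x"
| "lab_of \<sigma> (ALam x) = \<sigma> x"
| "lab_of \<sigma> AIota = None"
| "lab_of \<sigma> (AConst c) = Some c"

fun subst_atom :: "nat set \<Rightarrow> (nat \<Rightarrow> 's lab) \<Rightarrow> 's atom \<Rightarrow> 's atom" where
  "subst_atom B \<sigma> (AVar x) = (if x \<in> B then atom_of_lab (\<sigma> x) else AVar x)"
| "subst_atom B \<sigma> a = a"

fun subst :: "nat set \<Rightarrow> (nat \<Rightarrow> 's lab) \<Rightarrow> 's wterm \<Rightarrow> 's wterm" where
  "subst B \<sigma> (TVar Y) = TVar Y"
| "subst B \<sigma> (Seq P R) = Seq (subst B \<sigma> P) (subst B \<sigma> R)"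
| "subst B \<sigma> (Ten P R) = Ten (subst B \<sigma> P) (subst B \<sigma> R)"
| "subst B \<sigma> (Pref u v P) =
     (let B' = B - bd u v in
      Pref (map (subst_atom B' \<sigma>) u) (map (subst_atom B' \<sigma>) v) (subst B' \<sigma> P))"
| "subst B \<sigma> (Plus P R) = Plus (subst B \<sigma> P) (subst B \<sigma> R)"
| "subst B \<sigma> (Mu Y \<tau> P) = Mu Y \<tau> (subst B \<sigma> P)"

fun substY :: "nat \<Rightarrow> 's wterm \<Rightarrow> 's wterm \<Rightarrow> 's wterm" where
  "substY Y R (TVar Z) = (if Z = Y then R else TVar Z)"
| "substY Y R (Seq P Q) = Seq (substY Y R P) (substY Y R Q)"
| "substY Y R (Ten P Q) = Ten (substY Y R P) (substY Y R Q)"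
| "substY Y R (Pref u v P) = Pref u v (substY Y R P)"
| "substY Y R (Plus P Q) = Plus (substY Y R P) (substY Y R Q)"
| "substY Y R (Mu Z \<tau> P) = (if Z = Y then Mu Z \<tau> P else Mu Z \<tau> (substY Y R P))"

fun sortof :: "(nat \<Rightarrow> (nat \<times> nat) option) \<Rightarrow> 's wterm \<Rightarrow> (nat \<times> nat) option" where
  "sortof \<Gamma> (TVar Y) = \<Gamma> Y"
| "sortof \<Gamma> (Seq P R) =
     (case (sortof \<Gamma> P, sortof \<Gamma> R) of
        (Some (k, n), Some (n', l)) \<Rightarrow> if n = n' then Some (k, l) else None
      | _ \<Rightarrow> None)"
| "sortof \<Gamma> (Ten P R) =
     (case (sortof \<Gamma> P, sortof \<Gamma> R) of
        (Some (k, l), Some (m, n)) \<Rightarrow> Some (k + m, l + n)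
      | _ \<Rightarrow> None)"
| "sortof \<Gamma> (Pref u v P) =
     (if sortof \<Gamma> P = Some (length u, length v) then Some (length u, length v) else None)"
| "sortof \<Gamma> (Plus P R) =
     (if sortof \<Gamma> P = sortof \<Gamma> R then sortof \<Gamma> P else None)"
| "sortof \<Gamma> (Mu Y \<tau> P) =
     (if sortof (\<Gamma>(Y \<mapsto> \<tau>)) P = Some \<tau> then Some \<tau> else None)"

definition all_iota :: "'s lab list \<Rightarrow> bool" where
  "all_iota w \<longleftrightarrow> (\<forall>a \<in> set w. a = None)"

text \<open>wtrans P a b Q  means  P --a/b--> Q, with a the upper (left boundary) label
and b the lower (right boundary) label.\<close>
inductive wtrans :: "'s wterm \<Rightarrow> 's lab list \<Rightarrow> 's lab list \<Rightarrow> 's wterm \<Rightarrow> bool" where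
  Refl: "sortof Map.empty P = Some (k, l) \<Longrightarrow>
           wtrans P (replicate k None) (replicate l None) P"
| IotaL: "wtrans P a0 b0 R \<Longrightarrow> all_iota a0 \<Longrightarrow> all_iota b0 \<Longrightarrow> wtrans R a b Q \<Longrightarrow>
           wtrans P a b Q"
| IotaR: "wtrans P a b R \<Longrightarrow> wtrans R a0 b0 Q \<Longrightarrow> all_iota a0 \<Longrightarrow> all_iota b0 \<Longrightarrow>
           wtrans P a b Q"
| Cut: "wtrans P a c Q \<Longrightarrow> wtrans R c b S \<Longrightarrow> wtrans (Seq P R) a b (Seq Q S)"
| Ten: "wtrans P a b Q \<Longrightarrow> wtrans R c d S \<Longrightarrow> wtrans (Ten P R) (a @ c) (b @ d) (Ten Q S)"
| Pref: "wtrans (Pref u v P) (map (lab_of \<sigma>) u) (map (lab_of \<sigma>) v) (subst (bd u v) \<sigma> P)"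
| Rec: "wtrans (substY Y (Mu Y \<tau> P) P) a b Q \<Longrightarrow> wtrans (Mu Y \<tau> P) a b Q"
| PlusIota: "wtrans P a b P' \<Longrightarrow> wtrans Q a b Q' \<Longrightarrow> all_iota a \<Longrightarrow> all_iota b \<Longrightarrow>
           wtrans (Plus P Q) a b (Plus P' Q')"
| PlusL: "wtrans P a b P' \<Longrightarrow> \<not> all_iota (a @ b) \<Longrightarrow> wtrans (Plus P Q) a b P'"
| PlusR: "wtrans Q a b Q' \<Longrightarrow> \<not> all_iota (a @ b) \<Longrightarrow> wtrans (Plus P Q) a b Q'"

definition is_bisim :: "('s wterm \<times> 's wterm) set \<Rightarrow> bool" where
  "is_bisim S \<longleftrightarrow>
     (\<forall>P Q. (P, Q) \<in> S \<longrightarrow>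
        (\<forall>a b P'. wtrans P a b P' \<longrightarrow> (\<exists>Q'. wtrans Q a b Q' \<and> (P', Q') \<in> S)) \<and>
        (\<forall>a b Q'. wtrans Q a b Q' \<longrightarrow> (\<exists>P'. wtrans P a b P' \<and> (P', Q') \<in> S)))"

definition bisimilar :: "'s wterm \<Rightarrow> 's wterm \<Rightarrow> bool" (infix "\<approx>w" 50) where
  "P \<approx>w Q \<longleftrightarrow> (\<exists>S. is_bisim S \<and> (P, Q) \<in> S)"

definition wI :: "'s wterm" where
  "wI = Mu 0 (1, 1) (Pref [ALam 0] [ALam 0] (TVar 0))"

definition wd :: "'s wterm" where
  "wd = Mu 0 (0, 2) (Pref [] [ALam 0, ALam 0] (TVar 0))"

definition we :: "'s wterm" where
  "we = Mu 0 (2, 0) (Pref [ALam 0, ALam 0] [] (TVar 0))"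

end

theory Submission
  imports Defs
begin

text \<open>Each constant \<open>\<mu>Y. u/v.Y\<close> only ever moves between itself and its unfolding, and
does so with a fixed set of labels: \<open>a/a\<close> for \<open>I\<close>, \<open>\<epsilon>/aa\<close> for \<open>d\<close>, \<open>aa/\<epsilon>\<close> for \<open>e\<close>.
Such "label-uniform" state sets are preserved by \<open>\<otimes>\<close> and \<open>;\<close>, with labels combined by
concatenation and by relational composition respectively. Composing the label sets of
\<open>d \<otimes> I ; I \<otimes> e\<close> (and of \<open>I \<otimes> d ; e \<otimes> I\<close>) gives back exactly \<open>a/a\<close>, and two
label-uniform state sets with the same labels are related by a bisimulation.\<close>

definition wtrans_closed :: "('s wterm \<Rightarrow> bool) \<Rightarrow> ('s lab list \<Rightarrow> 's lab list \<Rightarrow> bool) \<Rightarrow> bool"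
  where "wtrans_closed A L \<longleftrightarrow> (\<forall>P a b P'. A P \<longrightarrow> wtrans P a b P' \<longrightarrow> A P' \<and> L a b)"

definition wtrans_total :: "('s wterm \<Rightarrow> bool) \<Rightarrow> ('s lab list \<Rightarrow> 's lab list \<Rightarrow> bool) \<Rightarrow> bool"
  where "wtrans_total A L \<longleftrightarrow> (\<forall>P a b. A P \<longrightarrow> L a b \<longrightarrow> (\<exists>P'. wtrans P a b P' \<and> A P'))"

definition label_uniform :: "('s wterm \<Rightarrow> bool) \<Rightarrow> ('s lab list \<Rightarrow> 's lab list \<Rightarrow> bool) \<Rightarrow> bool"
  where "label_uniform A L \<longleftrightarrow> wtrans_closed A L \<and> wtrans_total A L"

lemma bisimilar_if_label_uniform:
  assumes "label_uniform A L" "A P" "label_uniform B L" "B Q"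
  shows "P \<approx>w Q"
proof -
  have "is_bisim {(P, Q). A P \<and> B Q}"
    using assms(1,3)
    unfolding is_bisim_def label_uniform_def wtrans_closed_def wtrans_total_def by blast
  then show ?thesis
    using assms(2,4) unfolding bisimilar_def by blast
qed

lemma wtrans_closedD:
  "wtrans_closed A L \<Longrightarrow> A P \<Longrightarrow> wtrans P a b P' \<Longrightarrow> A P' \<and> L a b"
  unfolding wtrans_closed_def by blast

lemma wtrans_closed_idle:
  assumes "wtrans_closed A L" "A P" "sortof Map.empty P = Some (k, l)"
  shows "L (replicate k None) (replicate l None)"
  using wtrans_closedD[OF assms(1,2) wtrans.Refl[OF assms(3)]] by blast

definition tensor_states :: "('s wterm \<Rightarrow> bool) \<Rightarrow> ('s wterm \<Rightarrow> bool) \<Rightarrow> 's wterm \<Rightarrow> bool"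
  where "tensor_states A B P \<longleftrightarrow> (\<exists>X Y. P = Ten X Y \<and> A X \<and> B Y)"

definition seq_states :: "('s wterm \<Rightarrow> bool) \<Rightarrow> ('s wterm \<Rightarrow> bool) \<Rightarrow> 's wterm \<Rightarrow> bool"
  where "seq_states A B P \<longleftrightarrow> (\<exists>X Y. P = Seq X Y \<and> A X \<and> B Y)"

definition tensor_labels ::
    "('s lab list \<Rightarrow> 's lab list \<Rightarrow> bool) \<Rightarrow> ('s lab list \<Rightarrow> 's lab list \<Rightarrow> bool) \<Rightarrow>
     's lab list \<Rightarrow> 's lab list \<Rightarrow> bool"
  where "tensor_labels L M a b \<longleftrightarrow> (\<exists>a1 a2 b1 b2. a = a1 @ a2 \<and> b = b1 @ b2 \<and> L a1 b1 \<and> M a2 b2)"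

lemma sortof_TenD:
  assumes "sortof \<Gamma> (Ten X Y) = Some (k, l)"
  obtains k1 l1 k2 l2 where "sortof \<Gamma> X = Some (k1, l1)" "sortof \<Gamma> Y = Some (k2, l2)"
    "k = k1 + k2" "l = l1 + l2"
  using assms by (auto split: option.splits)

lemma sortof_SeqD:
  assumes "sortof \<Gamma> (Seq X Y) = Some (k, l)"
  obtains n where "sortof \<Gamma> X = Some (k, n)" "sortof \<Gamma> Y = Some (n, l)"
  using assms by (auto split: option.splits if_splits)

lemma wtrans_closed_tensor:
  assumes A: "wtrans_closed A L" and B: "wtrans_closed B M"
  shows "wtrans_closed (tensor_states A B) (tensor_labels L M)"
  unfolding wtrans_closed_def
proof (intro allI impI)
  fix P a b P'
  assume "tensor_states A B P" "wtrans P a b P'"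
  from this(2,1) show "tensor_states A B P' \<and> tensor_labels L M a b"
  proof (induction rule: wtrans.induct)
    case (Refl P k l)
    then obtain X Y where P: "P = Ten X Y" "A X" "B Y"
      by (auto simp: tensor_states_def)
    obtain k1 l1 k2 l2
      where sorts: "sortof Map.empty X = Some (k1, l1)" "sortof Map.empty Y = Some (k2, l2)"
      and "k = k1 + k2" "l = l1 + l2"
      using Refl.hyps unfolding P(1) by (rule sortof_TenD)
    moreover have "L (replicate k1 None) (replicate l1 None)" "M (replicate k2 None) (replicate l2 None)"
      using wtrans_closed_idle[OF A P(2) sorts(1)] wtrans_closed_idle[OF B P(3) sorts(2)] .
    ultimately have "tensor_labels L M (replicate k None) (replicate l None)"
      unfolding tensor_labels_def \<open>k = k1 + k2\<close> \<open>l = l1 + l2\<close> replicate_add by blast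
    then show ?case
      using Refl.prems by blast
  next
    case (Ten P a b Q R c d S)
    then have "A P" "B R"
      by (auto simp: tensor_states_def)
    with Ten.hyps have "A Q \<and> L a b" "B S \<and> M c d"
      using wtrans_closedD[OF A] wtrans_closedD[OF B] by blast+
    then show ?case
      unfolding tensor_states_def tensor_labels_def by blast
  qed (auto simp: tensor_states_def)
qed

lemma wtrans_closed_seq:
  assumes A: "wtrans_closed A L" and B: "wtrans_closed B M"
  shows "wtrans_closed (seq_states A B) (L OO M)"
  unfolding wtrans_closed_def
proof (intro allI impI)
  fix P a b P'
  assume "seq_states A B P" "wtrans P a b P'"
  from this(2,1) show "seq_states A B P' \<and> (L OO M) a b"
  proof (induction rule: wtrans.induct)
    case (Refl P k l)
    then obtain X Y where P: "P = Seq X Y" "A X" "B Y"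
      by (auto simp: seq_states_def)
    obtain n
      where sorts: "sortof Map.empty X = Some (k, n)" "sortof Map.empty Y = Some (n, l)"
      using Refl.hyps unfolding P(1) by (rule sortof_SeqD)
    have "(L OO M) (replicate k None) (replicate l None)"
      using wtrans_closed_idle[OF A P(2) sorts(1)] wtrans_closed_idle[OF B P(3) sorts(2)] ..
    then show ?case
      using Refl.prems by blast
  next
    case (Cut P a c Q R b S)
    then have "A P" "B R"
      by (auto simp: seq_states_def)
    with Cut.hyps have "A Q \<and> L a c" "B S \<and> M c b"
      using wtrans_closedD[OF A] wtrans_closedD[OF B] by blast+
    then show ?case
      unfolding seq_states_def by blast
  qed (auto simp: seq_states_def)
qed

lemma wtrans_total_tensor:
  assumes A: "wtrans_total A L" and B: "wtrans_total B M"
  shows "wtrans_total (tensor_states A B) (tensor_labels L M)"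
  unfolding wtrans_total_def
proof (intro allI impI)
  fix P a b
  assume "tensor_states A B P" "tensor_labels L M a b"
  then obtain X Y a1 a2 b1 b2 where "P = Ten X Y" "A X" "B Y"
    and "a = a1 @ a2" "b = b1 @ b2" "L a1 b1" "M a2 b2"
    unfolding tensor_states_def tensor_labels_def by blast
  moreover from A \<open>A X\<close> \<open>L a1 b1\<close> obtain X' where "wtrans X a1 b1 X'" "A X'"
    unfolding wtrans_total_def by blast
  moreover from B \<open>B Y\<close> \<open>M a2 b2\<close> obtain Y' where "wtrans Y a2 b2 Y'" "B Y'"
    unfolding wtrans_total_def by blast
  ultimately show "\<exists>P'. wtrans P a b P' \<and> tensor_states A B P'"
    unfolding tensor_states_def by (blast intro: wtrans.Ten)
qed

lemma wtrans_total_seq: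
  assumes A: "wtrans_total A L" and B: "wtrans_total B M"
  shows "wtrans_total (seq_states A B) (L OO M)"
  unfolding wtrans_total_def
proof (intro allI impI)
  fix P a b
  assume "seq_states A B P" "(L OO M) a b"
  then obtain X Y c where "P = Seq X Y" "A X" "B Y" "L a c" "M c b"
    unfolding seq_states_def by blast
  moreover from A \<open>A X\<close> \<open>L a c\<close> obtain X' where "wtrans X a c X'" "A X'"
    unfolding wtrans_total_def by blast
  moreover from B \<open>B Y\<close> \<open>M c b\<close> obtain Y' where "wtrans Y c b Y'" "B Y'"
    unfolding wtrans_total_def by blast
  ultimately show "\<exists>P'. wtrans P a b P' \<and> seq_states A B P'"
    unfolding seq_states_def by (blast intro: wtrans.Cut)
qed

lemma label_uniform_tensor:
  "label_uniform A L \<Longrightarrow> label_uniform B M \<Longrightarrow>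
    label_uniform (tensor_states A B) (tensor_labels L M)"
  by (simp add: label_uniform_def wtrans_closed_tensor wtrans_total_tensor)

lemma label_uniform_seq:
  "label_uniform A L \<Longrightarrow> label_uniform B M \<Longrightarrow> label_uniform (seq_states A B) (L OO M)"
  by (simp add: label_uniform_def wtrans_closed_seq wtrans_total_seq)

definition pref_loop :: "nat \<Rightarrow> 's atom list \<Rightarrow> 's atom list \<Rightarrow> 's wterm"
  where "pref_loop Y u v = Mu Y (length u, length v) (Pref u v (TVar Y))"

definition loop_states :: "nat \<Rightarrow> 's atom list \<Rightarrow> 's atom list \<Rightarrow> 's wterm \<Rightarrow> bool"
  where "loop_states Y u v P \<longleftrightarrow> P = pref_loop Y u v \<or> P = Pref u v (pref_loop Y u v)"

text \<open>The idle disjunct covers rule (Refl); it is not an instance of the prefix when \<open>u\<close> or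
\<open>v\<close> contains a constant.\<close>

definition loop_labels :: "'s atom list \<Rightarrow> 's atom list \<Rightarrow> 's lab list \<Rightarrow> 's lab list \<Rightarrow> bool"
  where "loop_labels u v a b \<longleftrightarrow>
    (\<exists>\<sigma>. a = map (lab_of \<sigma>) u \<and> b = map (lab_of \<sigma>) v) \<or>
    (a = replicate (length u) None \<and> b = replicate (length v) None)"

lemma subst_atom_empty [simp]: "subst_atom {} \<sigma> x = x"
  by (cases x) simp_all

lemma subst_pref_loop [simp]: "subst (bd u v) \<sigma> (pref_loop Y u v) = pref_loop Y u v"
  by (simp add: pref_loop_def map_idI)

lemma Pref_neq_pref_loop [simp]: "Pref u' v' P \<noteq> pref_loop Y u v"
  by (simp add: pref_loop_def)

lemma unfold_pref_loop:
  "Mu Z \<tau> P = pref_loop Y u v \<Longrightarrow> substY Z (Mu Z \<tau> P) P = Pref u v (pref_loop Y u v)"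
  by (auto simp: pref_loop_def)

lemma sortof_loop_states:
  "loop_states Y u v P \<Longrightarrow> sortof Map.empty P = Some (length u, length v)"
  by (auto simp: loop_states_def pref_loop_def)

lemma wtrans_closed_loop: "wtrans_closed (loop_states Y u v) (loop_labels u v)"
  unfolding wtrans_closed_def
proof (intro allI impI)
  fix P a b P'
  assume "loop_states Y u v P" "wtrans P a b P'"
  from this(2,1) show "loop_states Y u v P' \<and> loop_labels u v a b"
  proof (induction rule: wtrans.induct)
    case (Refl P k l)
    then show ?case
      using sortof_loop_states[OF Refl.prems] by (simp add: loop_labels_def)
  next
    case (Pref u' v' P \<sigma>)
    then show ?case
      by (auto simp: loop_states_def loop_labels_def)
  next
    case (Rec Z \<tau> P a b Q)
    then show ?case
      using unfold_pref_loop by (auto simp: loop_states_def pref_loop_def)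
  qed (auto simp: loop_states_def pref_loop_def)
qed

lemma wtrans_total_loop: "wtrans_total (loop_states Y u v) (loop_labels u v)"
  unfolding wtrans_total_def
proof (intro allI impI)
  fix P a b
  assume P: "loop_states Y u v P" and ab: "loop_labels u v a b"
  have unfolded: "wtrans (pref_loop Y u v) a b Q" if "wtrans (Pref u v (pref_loop Y u v)) a b Q" for Q
    using that by (auto simp: pref_loop_def intro: wtrans.Rec)
  from ab show "\<exists>P'. wtrans P a b P' \<and> loop_states Y u v P'"
  proof (elim loop_labels_def[THEN iffD1, elim_format] disjE exE conjE)
    fix \<sigma> assume "a = map (lab_of \<sigma>) u" "b = map (lab_of \<sigma>) v"
    then have "wtrans (Pref u v (pref_loop Y u v)) a b (pref_loop Y u v)"
      using wtrans.Pref[of u v "pref_loop Y u v" \<sigma>] by simp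
    then show ?thesis
      using P unfolded by (auto simp: loop_states_def)
  next
    assume "a = replicate (length u) None" "b = replicate (length v) None"
    then show ?thesis
      using P wtrans.Refl[OF sortof_loop_states[OF P]] by blast
  qed
qed

lemma label_uniform_loop: "label_uniform (loop_states Y u v) (loop_labels u v)"
  by (simp add: label_uniform_def wtrans_closed_loop wtrans_total_loop)

definition wire_labels :: "'s lab list \<Rightarrow> 's lab list \<Rightarrow> bool"
  where "wire_labels a b \<longleftrightarrow> (\<exists>x. a = [x] \<and> b = [x])"

definition cup_labels :: "'s lab list \<Rightarrow> 's lab list \<Rightarrow> bool"
  where "cup_labels a b \<longleftrightarrow> a = [] \<and> (\<exists>x. b = [x, x])"

definition cap_labels :: "'s lab list \<Rightarrow> 's lab list \<Rightarrow> bool"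
  where "cap_labels a b \<longleftrightarrow> (\<exists>x. a = [x, x]) \<and> b = []"

lemma loop_labels_wI: "loop_labels [ALam 0] [ALam 0] = wire_labels"
proof (intro ext iffI)
  fix a b :: "'s lab list"
  assume "wire_labels a b"
  then obtain x where "a = [x]" "b = [x]" unfolding wire_labels_def by blast
  then show "loop_labels [ALam 0] [ALam 0] a b"
    unfolding loop_labels_def by (auto intro: exI[of _ "\<lambda>_. x"])
qed (auto simp: loop_labels_def wire_labels_def)

lemma loop_labels_wd: "loop_labels [] [ALam 0, ALam 0] = cup_labels"
proof (intro ext iffI)
  fix a b :: "'s lab list"
  assume "cup_labels a b"
  then obtain x where "a = []" "b = [x, x]" unfolding cup_labels_def by blast
  then show "loop_labels [] [ALam 0, ALam 0] a b"
    unfolding loop_labels_def by (auto intro: exI[of _ "\<lambda>_. x"])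
qed (auto simp: loop_labels_def cup_labels_def)

lemma loop_labels_we: "loop_labels [ALam 0, ALam 0] [] = cap_labels"
proof (intro ext iffI)
  fix a b :: "'s lab list"
  assume "cap_labels a b"
  then obtain x where "a = [x, x]" "b = []" unfolding cap_labels_def by blast
  then show "loop_labels [ALam 0, ALam 0] [] a b"
    unfolding loop_labels_def by (auto intro: exI[of _ "\<lambda>_. x"])
qed (auto simp: loop_labels_def cap_labels_def)

lemma tensor_labels_cup_wire:
  "tensor_labels cup_labels wire_labels a b \<longleftrightarrow> (\<exists>x y. a = [y] \<and> b = [x, x, y])"
  by (auto simp: tensor_labels_def cup_labels_def wire_labels_def) (metis append_Cons append_Nil)

lemma tensor_labels_wire_cap:
  "tensor_labels wire_labels cap_labels a b \<longleftrightarrow> (\<exists>x y. a = [x, y, y] \<and> b = [x])"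
  by (auto simp: tensor_labels_def cap_labels_def wire_labels_def)

lemma tensor_labels_wire_cup:
  "tensor_labels wire_labels cup_labels a b \<longleftrightarrow> (\<exists>x y. a = [x] \<and> b = [x, y, y])"
  by (auto simp: tensor_labels_def cup_labels_def wire_labels_def) (metis append_Cons append_Nil)

lemma tensor_labels_cap_wire:
  "tensor_labels cap_labels wire_labels a b \<longleftrightarrow> (\<exists>x y. a = [x, x, y] \<and> b = [y])"
  by (auto simp: tensor_labels_def cap_labels_def wire_labels_def)

lemma snake_labels_left:
  "tensor_labels cup_labels wire_labels OO tensor_labels wire_labels cap_labels = wire_labels"
proof (intro ext iffI)
  fix a b :: "'s lab list"
  assume "wire_labels a b"
  then obtain x where "a = [x]" "b = [x]"
    unfolding wire_labels_def by blast
  then show "(tensor_labels cup_labels wire_labels OO tensor_labels wire_labels cap_labels) a b"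
    by (auto simp: tensor_labels_cup_wire tensor_labels_wire_cap intro!: relcomppI[of _ _ "[x, x, x]"])
qed (auto simp: tensor_labels_cup_wire tensor_labels_wire_cap wire_labels_def)

lemma snake_labels_right:
  "tensor_labels wire_labels cup_labels OO tensor_labels cap_labels wire_labels = wire_labels"
proof (intro ext iffI)
  fix a b :: "'s lab list"
  assume "wire_labels a b"
  then obtain x where "a = [x]" "b = [x]"
    unfolding wire_labels_def by blast
  then show "(tensor_labels wire_labels cup_labels OO tensor_labels cap_labels wire_labels) a b"
    by (auto simp: tensor_labels_wire_cup tensor_labels_cap_wire intro!: relcomppI[of _ _ "[x, x, x]"])
qed (auto simp: tensor_labels_wire_cup tensor_labels_cap_wire wire_labels_def)

lemma label_uniform_wI: "label_uniform (loop_states 0 [ALam 0] [ALam 0]) wire_labels"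
  using label_uniform_loop loop_labels_wI by metis

lemma label_uniform_wd: "label_uniform (loop_states 0 [] [ALam 0, ALam 0]) cup_labels"
  using label_uniform_loop loop_labels_wd by metis

lemma label_uniform_we: "label_uniform (loop_states 0 [ALam 0, ALam 0] []) cap_labels"
  using label_uniform_loop loop_labels_we by metis

lemma loop_states_constants:
  "loop_states 0 [ALam 0] [ALam 0] wI"
  "loop_states 0 [] [ALam 0, ALam 0] wd"
  "loop_states 0 [ALam 0, ALam 0] [] we"
  by (simp_all add: loop_states_def pref_loop_def wI_def wd_def we_def)

theorem mainTheorem4:
  shows "Seq (Ten (wd :: 's wterm) wI) (Ten wI we) \<approx>w wI \<and>
         (wI :: 's wterm) \<approx>w Seq (Ten wI wd) (Ten we wI)"
proof
  let ?I = "loop_states 0 [ALam 0] [ALam 0] :: 's wterm \<Rightarrow> bool"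
  let ?d = "loop_states 0 [] [ALam 0, ALam 0] :: 's wterm \<Rightarrow> bool"
  let ?e = "loop_states 0 [ALam 0, ALam 0] [] :: 's wterm \<Rightarrow> bool"
  note I = label_uniform_wI and d = label_uniform_wd and e = label_uniform_we
  have "label_uniform (seq_states (tensor_states ?d ?I) (tensor_states ?I ?e)) wire_labels"
    using label_uniform_seq[OF label_uniform_tensor[OF d I] label_uniform_tensor[OF I e]]
    unfolding snake_labels_left .
  moreover have "seq_states (tensor_states ?d ?I) (tensor_states ?I ?e) (Seq (Ten wd wI) (Ten wI we))"
    using loop_states_constants unfolding seq_states_def tensor_states_def by blast
  ultimately show "Seq (Ten (wd :: 's wterm) wI) (Ten wI we) \<approx>w wI"
    by (rule bisimilar_if_label_uniform[OF _ _ I loop_states_constants(1)])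
  have "label_uniform (seq_states (tensor_states ?I ?d) (tensor_states ?e ?I)) wire_labels"
    using label_uniform_seq[OF label_uniform_tensor[OF I d] label_uniform_tensor[OF e I]]
    unfolding snake_labels_right .
  moreover have "seq_states (tensor_states ?I ?d) (tensor_states ?e ?I) (Seq (Ten wI wd) (Ten we wI))"
    using loop_states_constants unfolding seq_states_def tensor_states_def by blast
  ultimately show "(wI :: 's wterm) \<approx>w Seq (Ten wI wd) (Ten we wI)"
    by (rule bisimilar_if_label_uniform[OF I loop_states_constants(1)])
qed

end
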